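(* Consider the online asynchronous testing setting with conflict sets described in the context, with test levels $\alpha_j\ge0$ that are $\mathcal{F}^{-\mathcal{X}^j}$-measurable for every $j$. Suppose that for every $t\in\mathcal{H}^0$ and every $u\in[0,1]$, $\mathbb{P}(P_t\le u\mid\mathcal{F}^{-\mathcal{X}^{E_t}})\le u$. Then, for every $t\in\mathbb{N}$, if $\mathrm{FDP}^*(t)\le\alpha$ almost surely, where $$\mathrm{FDP}^*(t)=\frac{\sum_{j\le t,\ j\in\mathcal{H}^0}\alpha_j}{(\sum_{j:\,E_j\le t}R_j)\vee1},$$ then $\mathrm{mFDR}(t)\le\alpha$.
   Context: Hypotheses $H_1,H_2,\dots$ are tested; the test of $H_t$ starts at step $t$, is run at level $\alpha_t$ (and possibly with a candidacy threshold $\lambda_t\in[\alpha_t,1)$), and produces a $p$-value $P_t$. $\mathcal{H}^0$ is the fixed set of indices of true nulls. Test $t$ has a fixed decision time $E_t\ge t$. $R_t=\mathbf{1}\{P_t\le\alpha_t\}$, $C_t=\mathbf{1}\{P_t\le\lambda_t\}$. $\{L_t\}$ is a fixed sequence of nonnegative integer lags with $L_{t+1}\le L_t+1$; the conflict set is $\mathcal{X}^t=\{i\in[t-1]:E_i\ge t\}\cup(\{t-L_t,\dots,t-1\}\cap[t-1])$. $\mathcal{F}^{-\mathcal{X}^t}$ denotes either $\sigma(R_i:i\le t-1,\ i\notin\mathcal{X}^t)$ or $\sigma(R_i,C_i:i\le t-1,\ i\notin\mathcal{X}^t)$. $\mathcal{R}(t)=\{i\in[t]:E_i\le t,\ P_i\le\alpha_i\}$,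 $\mathcal{V}(t)=\mathcal{R}(t)\cap\mathcal{H}^0$, $\mathrm{mFDR}(t)=\mathbb{E}|\mathcal{V}(t)|/\mathbb{E}[|\mathcal{R}(t)|\vee1]$. *)

theory Defs
  imports "HOL-Probability.Probability"
begin

text \<open>Hypotheses are indexed by 1, 2, 3, ...; [t-1] = {1..<t}.\<close>

definition conflict_set :: "(nat \<Rightarrow> nat) \<Rightarrow> (nat \<Rightarrow> nat) \<Rightarrow> nat \<Rightarrow> nat set" where
  "conflict_set E L t = {i \<in> {1..<t}. E i \<ge> t} \<union> ({t - L t..<t} \<inter> {1..<t})"

text \<open>The filtration F^{-X^t}: generated by R_i (and, if withC, also C_i) for i in [t-1] minus X^t.
  Since R_i, C_i are indicators, the generated sigma algebra is the one generated by the events.\<close>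
definition Fminus ::
  "'a measure \<Rightarrow> bool \<Rightarrow> (nat \<Rightarrow> 'a \<Rightarrow> real) \<Rightarrow> (nat \<Rightarrow> 'a \<Rightarrow> real) \<Rightarrow> (nat \<Rightarrow> 'a \<Rightarrow> real)
    \<Rightarrow> (nat \<Rightarrow> nat) \<Rightarrow> (nat \<Rightarrow> nat) \<Rightarrow> nat \<Rightarrow> 'a measure" where
  "Fminus M withC P alpha lambda E L t =
     sigma (space M)
       ({{x \<in> space M. P i x \<le> alpha i x} | i. i \<in> {1..<t} - conflict_set E L t}
        \<union> (if withC then {{x \<in> space M. P i x \<le> lambda i x} | i. i \<in> {1..<t} - conflict_set E L t}
           else {}))"

definition rej_set :: "(nat \<Rightarrow> 'a \<Rightarrow> real) \<Rightarrow> (nat \<Rightarrow> 'a \<Rightarrow> real) \<Rightarrow> (nat \<Rightarrow> nat) \<Rightarrow> nat \<Rightarrow> 'a \<Rightarrow> nat set" where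
  "rej_set P alpha E t x = {i \<in> {1..t}. E i \<le> t \<and> P i x \<le> alpha i x}"

definition false_rej_set :: "nat set \<Rightarrow> (nat \<Rightarrow> 'a \<Rightarrow> real) \<Rightarrow> (nat \<Rightarrow> 'a \<Rightarrow> real) \<Rightarrow> (nat \<Rightarrow> nat) \<Rightarrow> nat \<Rightarrow> 'a \<Rightarrow> nat set" where
  "false_rej_set H0 P alpha E t x = rej_set P alpha E t x \<inter> H0"

definition mFDR :: "'a measure \<Rightarrow> nat set \<Rightarrow> (nat \<Rightarrow> 'a \<Rightarrow> real) \<Rightarrow> (nat \<Rightarrow> 'a \<Rightarrow> real) \<Rightarrow> (nat \<Rightarrow> nat) \<Rightarrow> nat \<Rightarrow> real" where
  "mFDR M H0 P alpha E t =
     (\<integral>x. real (card (false_rej_set H0 P alpha E t x)) \<partial>M) /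
     (\<integral>x. max (real (card (rej_set P alpha E t x))) 1 \<partial>M)"

definition Rind :: "(nat \<Rightarrow> 'a \<Rightarrow> real) \<Rightarrow> (nat \<Rightarrow> 'a \<Rightarrow> real) \<Rightarrow> nat \<Rightarrow> 'a \<Rightarrow> real" where
  "Rind P alpha j x = (if P j x \<le> alpha j x then 1 else 0)"

definition FDP_star :: "nat set \<Rightarrow> (nat \<Rightarrow> 'a \<Rightarrow> real) \<Rightarrow> (nat \<Rightarrow> 'a \<Rightarrow> real) \<Rightarrow> (nat \<Rightarrow> nat) \<Rightarrow> nat \<Rightarrow> 'a \<Rightarrow> real" where
  "FDP_star H0 P alpha E t x =
     (\<Sum>j \<in> {1..t} \<inter> H0. alpha j x) /
     max (\<Sum>j \<in> {j. 1 \<le> j \<and> E j \<le> t}. Rind P alpha j x) 1"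

end

theory Submission
  imports Defs
begin

(* A true null j is rejected with probability at most E[alpha_j]. Indeed alpha_j is measurable
   w.r.t. F^{-X^j}, and these sigma-algebras increase in t because t - L_t is nondecreasing, so
   alpha_j is known at the decision time E_j. Rounding alpha_j up to a finite grid, conditional
   superuniformity applies on each level set, and the rounding error vanishes in the limit.
   Summing over the nulls decided by time t and integrating the almost sure bound on FDP* gives
   E|V(t)| <= E[sum_{j <= t, j in H0} alpha_j] <= a E[|R(t)| v 1]. *)

lemma (in finite_measure) integrable_bounded:
  fixes f :: "'a \<Rightarrow> real"
  assumes "f \<in> borel_measurable M" and "\<And>x. x \<in> space M \<Longrightarrow> \<bar>f x\<bar> \<le> B"
  shows "integrable M f"
  using assms by (intro integrable_const_bound[where B = B]) auto

lemma nat_ceiling_grid_bounds: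
  fixes y :: real and n :: nat
  assumes "0 \<le> y" "y \<le> 1" "0 < n"
  shows "y \<le> real (nat \<lceil>n * y\<rceil>) / n" "real (nat \<lceil>n * y\<rceil>) / n \<le> y + 1 / n"
    "nat \<lceil>n * y\<rceil> \<le> n"
proof -
  have "0 \<le> n * y" "n * y \<le> n"
    using assms by (auto simp: mult_left_le)
  moreover have "n * y \<le> \<lceil>n * y\<rceil>" "\<lceil>n * y\<rceil> < n * y + 1"
    by linarith+
  ultimately show "y \<le> real (nat \<lceil>n * y\<rceil>) / n" "real (nat \<lceil>n * y\<rceil>) / n \<le> y + 1 / n"
    "nat \<lceil>n * y\<rceil> \<le> n"
    using assms(3) by (auto simp: field_simps nat_le_iff ceiling_le_iff)
qed

section \<open>Conditionally superuniform p-values\<close>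

locale superuniform_pvalue = prob_space M + finite_measure_subalgebra M G
  for M :: "'a measure" and G :: "'a measure" +
  fixes Q :: "'a \<Rightarrow> real"
  assumes Q_measurable [measurable]: "Q \<in> borel_measurable M"
    and cond_superuniform: "\<And>u. 0 \<le> u \<Longrightarrow> u \<le> 1 \<Longrightarrow>
      AE x in M. real_cond_exp M G (indicator {y \<in> space M. Q y \<le> u}) x \<le> u"
begin

lemma integral_mult_indicator_le:
  assumes f_G [measurable]: "f \<in> borel_measurable G"
    and f_int: "integrable M f" and f_nonneg: "\<And>x. x \<in> space M \<Longrightarrow> 0 \<le> f x"
    and u: "0 \<le> u" "u \<le> 1"
  shows "(\<integral>x. f x * indicator {y \<in> space M. Q y \<le> u} x \<partial>M) \<le> u * (\<integral>x. f x \<partial>M)"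
proof -
  let ?g = "indicator {y \<in> space M. Q y \<le> u} :: 'a \<Rightarrow> real"
  have f_M [measurable]: "f \<in> borel_measurable M"
    using measurable_from_subalg[OF subalg f_G] .
  have fg_int: "integrable M (\<lambda>x. f x * ?g x)"
    using integrable_mult_indicator[OF _ f_int, of "{y \<in> space M. Q y \<le> u}"]
    by (simp add: mult.commute)
  have "(\<integral>x. f x * ?g x \<partial>M) = (\<integral>x. f x * real_cond_exp M G ?g x \<partial>M)"
    using real_cond_exp_intg(2)[OF fg_int f_G] by simp
  also have "\<dots> \<le> (\<integral>x. f x * u \<partial>M)"
  proof (rule integral_mono_AE)
    show "integrable M (\<lambda>x. f x * real_cond_exp M G ?g x)"
      using real_cond_exp_intg(1)[OF fg_int f_G] by simp
    show "AE x in M. f x * real_cond_exp M G ?g x \<le> f x * u"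
      using cond_superuniform[OF u] AE_space by eventually_elim (simp add: f_nonneg mult_left_mono)
  qed (use f_int in simp)
  finally show ?thesis by (simp add: mult.commute)
qed

lemma integral_rejection_le_finite_valued:
  assumes b_G [measurable]: "b \<in> borel_measurable G"
    and V: "finite V" "V \<subseteq> {0..1}" and b_V: "\<And>x. x \<in> space M \<Longrightarrow> b x \<in> V"
  shows "(\<integral>x. (if Q x \<le> b x then 1 else 0) \<partial>M) \<le> (\<integral>x. b x \<partial>M)"
proof -
  define f :: "real \<Rightarrow> 'a \<Rightarrow> real" where "f v = indicator {x \<in> space M. b x = v}" for v
  have space_G: "space G = space M"
    using subalg by (simp add: subalgebra_def)
  have f_G [measurable]: "f v \<in> borel_measurable G" for v
  proof -
    have "{x \<in> space G. b x = v} \<in> sets G" by measurable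
    then show ?thesis unfolding f_def space_G by simp
  qed
  have f_M [measurable]: "f v \<in> borel_measurable M" for v
    using measurable_from_subalg[OF subalg f_G] .
  have f_int: "integrable M (f v)" for v
    by (rule integrable_bounded[OF f_M, where B = 1]) (simp add: f_def indicator_def)
  have fQ_int: "integrable M (\<lambda>x. f v x * indicator {y \<in> space M. Q y \<le> u} x)" for v u
    by (rule integrable_bounded[where B = 1], measurable) (simp add: f_def indicator_def)
  have f_split: "(\<Sum>v\<in>V. f v x * c v) = c (b x)" if "x \<in> space M" for x c
    using V(1) b_V[OF that] that by (simp add: f_def indicator_def if_distrib cong: if_cong)
  have "(\<integral>x. (if Q x \<le> b x then 1 else 0) \<partial>M)
      = (\<integral>x. (\<Sum>v\<in>V. f v x * indicator {y \<in> space M. Q y \<le> v} x) \<partial>M)"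
    by (rule Bochner_Integration.integral_cong[OF refl]) (auto simp: f_split indicator_def)
  also have "\<dots> = (\<Sum>v\<in>V. \<integral>x. f v x * indicator {y \<in> space M. Q y \<le> v} x \<partial>M)"
    by (rule Bochner_Integration.integral_sum) (rule fQ_int)
  also have "\<dots> \<le> (\<Sum>v\<in>V. v * (\<integral>x. f v x \<partial>M))"
    using V(2) by (intro sum_mono integral_mult_indicator_le f_G f_int) (auto simp: f_def)
  also have "\<dots> = (\<integral>x. (\<Sum>v\<in>V. f v x * v) \<partial>M)"
    by (subst Bochner_Integration.integral_sum) (auto simp: f_int mult.commute)
  also have "\<dots> = (\<integral>x. b x \<partial>M)"
    by (rule Bochner_Integration.integral_cong[OF refl]) (auto simp: f_split)
  finally show ?thesis .
qed

lemma integral_rejection_le_approx: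
  fixes n :: nat
  assumes al_G [measurable]: "al \<in> borel_measurable G"
    and al_nonneg: "\<And>x. x \<in> space M \<Longrightarrow> 0 \<le> al x" and al_int: "integrable M al"
    and n: "0 < n"
  shows "(\<integral>x. (if Q x \<le> al x then 1 else 0) \<partial>M) \<le> (\<integral>x. al x \<partial>M) + 1 / n"
proof -
  \<comment> \<open>Round \<open>al\<close> up to the grid \<open>k / n\<close> where \<open>al \<le> 1\<close>; where \<open>al > 1\<close> the rejection
    is paid for by \<open>big \<le> al\<close>.\<close>
  define b where "b x = (if al x \<le> 1 then real (nat \<lceil>n * al x\<rceil>) / n else 0)" for x
  define big :: "'a \<Rightarrow> real" where "big x = (if 1 < al x then 1 else 0)" for x
  have al_M [measurable]: "al \<in> borel_measurable M"
    using measurable_from_subalg[OF subalg al_G] .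
  have b_G [measurable]: "b \<in> borel_measurable G"
    unfolding b_def by measurable
  have b_M [measurable]: "b \<in> borel_measurable M"
    using measurable_from_subalg[OF subalg b_G] .
  have big_M [measurable]: "big \<in> borel_measurable M"
    unfolding big_def by measurable
  have grid: "(\<lambda>k. real k / n) ` {..n} \<subseteq> {0..1}"
    using n by (auto simp: divide_le_eq_1)
  have b_grid: "b x \<in> (\<lambda>k. real k / n) ` {..n}" if "x \<in> space M" for x
    using nat_ceiling_grid_bounds(3)[OF al_nonneg[OF that] _ n] by (auto simp: b_def)
  have cover: "(if Q x \<le> al x then 1 else 0) \<le> (if Q x \<le> b x then 1 else 0) + big x"
    if "x \<in> space M" for x
    using nat_ceiling_grid_bounds(1)[OF al_nonneg[OF that] _ n]
    by (cases "al x \<le> 1") (auto simp: b_def big_def)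
  have dominate: "b x + big x \<le> al x + 1 / n" if "x \<in> space M" for x
    using nat_ceiling_grid_bounds(2)[OF al_nonneg[OF that] _ n]
    by (cases "al x \<le> 1") (auto simp: big_def b_def add_increasing2)
  have rejection_int: "integrable M (\<lambda>x. if Q x \<le> c x then 1 else 0 :: real)"
    if [measurable]: "c \<in> borel_measurable M" for c
    by (rule integrable_bounded[where B = 1]) auto
  have big_int: "integrable M big"
    by (rule integrable_bounded[where B = 1]) (auto simp: big_def)
  have b_int: "integrable M b"
    by (rule integrable_bounded[OF b_M, where B = 1]) (use b_grid grid in fastforce)
  have "(\<integral>x. (if Q x \<le> al x then 1 else 0) \<partial>M)
      \<le> (\<integral>x. (if Q x \<le> b x then 1 else 0) \<partial>M) + (\<integral>x. big x \<partial>M)"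
    using cover by (subst Bochner_Integration.integral_add[symmetric]) (auto intro!: integral_mono rejection_int big_int)
  also have "\<dots> \<le> (\<integral>x. b x \<partial>M) + (\<integral>x. big x \<partial>M)"
    using integral_rejection_le_finite_valued[OF b_G _ grid b_grid] by simp
  also have "\<dots> \<le> (\<integral>x. al x + 1 / n \<partial>M)"
    using dominate al_int
    by (subst Bochner_Integration.integral_add[OF b_int big_int, symmetric])
      (intro integral_mono Bochner_Integration.integrable_add b_int big_int; simp)
  also have "\<dots> = (\<integral>x. al x \<partial>M) + 1 / n"
    using al_int by (simp add: prob_space)
  finally show ?thesis .
qed

lemma integral_rejection_le:
  assumes "al \<in> borel_measurable G"
    and "\<And>x. x \<in> space M \<Longrightarrow> 0 \<le> al x" and "integrable M al"
  shows "(\<integral>x. (if Q x \<le> al x then 1 else 0) \<partial>M) \<le> (\<integral>x. al x \<partial>M)"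
proof (rule field_le_epsilon)
  fix e :: real
  assume "0 < e"
  then obtain n :: nat where n: "0 < n" "1 / real n < e"
    using ex_inverse_of_nat_less by (auto simp: inverse_eq_divide)
  then show "(\<integral>x. (if Q x \<le> al x then 1 else 0) \<partial>M) \<le> (\<integral>x. al x \<partial>M) + e"
    using integral_rejection_le_approx[OF assms n(1)] by linarith
qed

end

section \<open>The filtrations without conflict sets\<close>

definition nonconflict_set :: "(nat \<Rightarrow> nat) \<Rightarrow> (nat \<Rightarrow> nat) \<Rightarrow> nat \<Rightarrow> nat set" where
  "nonconflict_set E L t = {1..<t} - conflict_set E L t"

definition Fminus_generators ::
  "'a measure \<Rightarrow> bool \<Rightarrow> (nat \<Rightarrow> 'a \<Rightarrow> real) \<Rightarrow> (nat \<Rightarrow> 'a \<Rightarrow> real) \<Rightarrow> (nat \<Rightarrow> 'a \<Rightarrow> real)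
    \<Rightarrow> nat set \<Rightarrow> 'a set set" where
  "Fminus_generators M withC P alpha lambda I =
     {{x \<in> space M. P i x \<le> alpha i x} | i. i \<in> I}
     \<union> (if withC then {{x \<in> space M. P i x \<le> lambda i x} | i. i \<in> I} else {})"

lemma diff_lag_mono:
  assumes lag: "\<And>j. L (Suc j) \<le> L j + 1" and "k \<le> k'"
  shows "k - L k \<le> k' - L k'"
  using \<open>k \<le> k'\<close>
proof (induction k' rule: dec_induct)
  case (step m)
  then show ?case using lag[of m] by linarith
qed simp

lemma nonconflict_set_mono:
  assumes lag: "\<And>j. L (Suc j) \<le> L j + 1" and "j \<le> t"
  shows "nonconflict_set E L j \<subseteq> nonconflict_set E L t"
  using diff_lag_mono[of L, OF lag \<open>j \<le> t\<close>] \<open>j \<le> t\<close>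
  by (auto simp: nonconflict_set_def conflict_set_def)

lemma Fminus_generators_mono:
  "I \<subseteq> J \<Longrightarrow> Fminus_generators M withC P alpha lambda I \<subseteq> Fminus_generators M withC P alpha lambda J"
  unfolding Fminus_generators_def by auto

lemma sets_Fminus:
  "sets (Fminus M withC P alpha lambda E L t)
     = sigma_sets (space M) (Fminus_generators M withC P alpha lambda (nonconflict_set E L t))"
  unfolding Fminus_def Fminus_generators_def nonconflict_set_def
  by (rule sets_measure_of) auto

lemma space_Fminus: "space (Fminus M withC P alpha lambda E L t) = space M"
  unfolding Fminus_def by (simp add: space_measure_of_conv)

lemma subalgebra_Fminus_mono:
  assumes "\<And>j. L (Suc j) \<le> L j + 1" and "j \<le> t"
  shows "subalgebra (Fminus M withC P alpha lambda E L t) (Fminus M withC P alpha lambda E L j)"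
  unfolding subalgebra_def space_Fminus sets_Fminus
  by (simp add: sigma_sets_mono' Fminus_generators_mono nonconflict_set_mono[of L, OF assms])

lemma subalgebra_Fminus:
  assumes P_meas: "\<And>i. i \<in> {1..<t} \<Longrightarrow> P i \<in> borel_measurable M"
    and alpha_meas: "\<And>i. i \<in> {1..<t} \<Longrightarrow> alpha i \<in> borel_measurable M"
    and lambda_meas: "\<And>i. withC \<Longrightarrow> i \<in> {1..<t} \<Longrightarrow> lambda i \<in> borel_measurable M"
  shows "subalgebra M (Fminus M withC P alpha lambda E L t)"
proof -
  have "Fminus_generators M withC P alpha lambda (nonconflict_set E L t) \<subseteq> sets M"
    using P_meas alpha_meas lambda_meas
    by (auto simp: Fminus_generators_def nonconflict_set_def split: if_splits)
  then show ?thesis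
    unfolding subalgebra_def space_Fminus sets_Fminus by (simp add: sets.sigma_sets_subset)
qed

lemma levels_borel_measurable:
  assumes P_meas: "\<And>j. 1 \<le> j \<Longrightarrow> P j \<in> borel_measurable M"
    and lambda_meas: "\<And>j. withC \<Longrightarrow> 1 \<le> j \<Longrightarrow> lambda j \<in> borel_measurable M"
    and alpha_meas: "\<And>j. 1 \<le> j \<Longrightarrow> alpha j \<in> borel_measurable (Fminus M withC P alpha lambda E L j)"
    and "1 \<le> j"
  shows "alpha j \<in> borel_measurable M"
  using \<open>1 \<le> j\<close>
proof (induction j rule: less_induct)
  case (less j)
  \<comment> \<open>\<open>Fminus \<dots> j\<close> is generated by the outcomes of tests \<open>i < j\<close> only.\<close>
  have "subalgebra M (Fminus M withC P alpha lambda E L j)"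
    using less P_meas lambda_meas by (intro subalgebra_Fminus) auto
  then show ?case
    using measurable_from_subalg alpha_meas[OF less.prems] by blast
qed

lemma measurable_Fminus_mono:
  assumes "\<And>j. L (Suc j) \<le> L j + 1" and "j \<le> t"
    and "f \<in> borel_measurable (Fminus M withC P alpha lambda E L j)"
  shows "f \<in> borel_measurable (Fminus M withC P alpha lambda E L t)"
  using measurable_from_subalg[OF subalgebra_Fminus_mono[of L, OF assms(1,2)] assms(3)] .

section \<open>Counting rejections\<close>

lemma decided_by_subset:
  fixes E :: "nat \<Rightarrow> nat"
  assumes "\<And>j. 1 \<le> j \<Longrightarrow> j \<le> E j"
  shows "{j. 1 \<le> j \<and> E j \<le> t} \<subseteq> {1..t}"
proof
  fix j
  assume "j \<in> {j. 1 \<le> j \<and> E j \<le> t}"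
  with assms[of j] show "j \<in> {1..t}" by simp
qed

lemma finite_decided_by:
  fixes E :: "nat \<Rightarrow> nat"
  assumes "\<And>j. 1 \<le> j \<Longrightarrow> j \<le> E j"
  shows "finite {j. 1 \<le> j \<and> E j \<le> t}"
  using decided_by_subset[of E t] assms finite_subset by blast

lemma sum_Rind_eq_card:
  "finite A \<Longrightarrow> (\<Sum>j\<in>A. Rind P alpha j x) = real (card {j \<in> A. P j x \<le> alpha j x})"
  unfolding Rind_def by (simp add: sum.If_cases Int_def)

lemma card_rej_set_eq_sum:
  assumes E_ge: "\<And>j. 1 \<le> j \<Longrightarrow> j \<le> E j"
  shows "real (card (rej_set P alpha E t x)) = (\<Sum>j | 1 \<le> j \<and> E j \<le> t. Rind P alpha j x)"
proof -
  have "rej_set P alpha E t x = {j \<in> {j. 1 \<le> j \<and> E j \<le> t}. P j x \<le> alpha j x}"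
    using decided_by_subset[of E t] E_ge by (auto simp: rej_set_def)
  then show ?thesis
    using finite_decided_by[of E t] E_ge by (simp add: sum_Rind_eq_card)
qed

lemma card_false_rej_set_eq_sum:
  assumes E_ge: "\<And>j. 1 \<le> j \<Longrightarrow> j \<le> E j"
  shows "real (card (false_rej_set H0 P alpha E t x))
           = (\<Sum>j \<in> {j. 1 \<le> j \<and> E j \<le> t} \<inter> H0. Rind P alpha j x)"
proof -
  have "false_rej_set H0 P alpha E t x = {j \<in> {j. 1 \<le> j \<and> E j \<le> t} \<inter> H0. P j x \<le> alpha j x}"
    using decided_by_subset[of E t] E_ge by (auto simp: false_rej_set_def rej_set_def)
  then show ?thesis
    using finite_decided_by[of E t] E_ge by (simp add: sum_Rind_eq_card)
qed

lemma FDP_star_eq: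
  assumes "\<And>j. 1 \<le> j \<Longrightarrow> j \<le> E j"
  shows "FDP_star H0 P alpha E t x
           = (\<Sum>j \<in> {1..t} \<inter> H0. alpha j x) / max (real (card (rej_set P alpha E t x))) 1"
  using card_rej_set_eq_sum[of E P alpha t x] assms by (simp add: FDP_star_def)

lemma Rind_borel_measurable [measurable]:
  "P j \<in> borel_measurable M \<Longrightarrow> alpha j \<in> borel_measurable M \<Longrightarrow> Rind P alpha j \<in> borel_measurable M"
  unfolding Rind_def by measurable

lemma integrable_summand_if_dominated:
  fixes f :: "'i \<Rightarrow> 'a \<Rightarrow> real"
  assumes "finite I" "i \<in> I"
    and f_meas: "\<And>i. i \<in> I \<Longrightarrow> f i \<in> borel_measurable M"
    and f_nonneg: "\<And>i x. i \<in> I \<Longrightarrow> x \<in> space M \<Longrightarrow> 0 \<le> f i x"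
    and g_int: "integrable M g" and dominated: "AE x in M. (\<Sum>i\<in>I. f i x) \<le> g x"
  shows "integrable M (f i)"
proof (rule Bochner_Integration.integrable_bound[OF g_int f_meas[OF \<open>i \<in> I\<close>]])
  show "AE x in M. norm (f i x) \<le> norm (g x)"
    using dominated AE_space
  proof eventually_elim
    case (elim x)
    have "f i x \<le> (\<Sum>i\<in>I. f i x)"
      using assms(1,2) f_nonneg elim(2) by (intro member_le_sum) auto
    then show ?case
      using f_nonneg[OF \<open>i \<in> I\<close> elim(2)] elim(1) by simp
  qed
qed

context prob_space
begin

lemma integrable_Rind:
  "P j \<in> borel_measurable M \<Longrightarrow> alpha j \<in> borel_measurable M \<Longrightarrow> integrable M (Rind P alpha j)"
  by (rule integrable_bounded[where B = 1]) (auto simp: Rind_def)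

lemma integral_card_false_rej_set_le:
  assumes E_ge: "\<And>j. 1 \<le> j \<Longrightarrow> j \<le> E j"
    and P_meas: "\<And>j. 1 \<le> j \<Longrightarrow> P j \<in> borel_measurable M"
    and alpha_M: "\<And>j. 1 \<le> j \<Longrightarrow> alpha j \<in> borel_measurable M"
  shows "(\<integral>x. real (card (false_rej_set H0 P alpha E t x)) \<partial>M)
           \<le> (\<Sum>j \<in> {1..t} \<inter> H0. \<integral>x. Rind P alpha j x \<partial>M)"
proof -
  have "(\<integral>x. real (card (false_rej_set H0 P alpha E t x)) \<partial>M)
      = (\<Sum>j \<in> {j. 1 \<le> j \<and> E j \<le> t} \<inter> H0. \<integral>x. Rind P alpha j x \<partial>M)"
    using E_ge
    by (simp add: card_false_rej_set_eq_sum integrable_Rind P_meas alpha_M Bochner_Integration.integral_sum)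
  also have "\<dots> \<le> (\<Sum>j \<in> {1..t} \<inter> H0. \<integral>x. Rind P alpha j x \<partial>M)"
    using decided_by_subset[of E t] E_ge by (intro sum_mono2) (auto simp: Rind_def)
  finally show ?thesis .
qed

lemma integrable_max_card_rej_set:
  assumes E_ge: "\<And>j. 1 \<le> j \<Longrightarrow> j \<le> E j"
    and P_meas: "\<And>j. 1 \<le> j \<Longrightarrow> P j \<in> borel_measurable M"
    and alpha_M: "\<And>j. 1 \<le> j \<Longrightarrow> alpha j \<in> borel_measurable M"
  shows "integrable M (\<lambda>x. max (real (card (rej_set P alpha E t x))) 1)"
proof (rule integrable_bounded[where B = "real t + 1"])
  show "(\<lambda>x. max (real (card (rej_set P alpha E t x))) 1) \<in> borel_measurable M"
    using E_ge P_meas alpha_M by (simp add: card_rej_set_eq_sum)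
  have "card (rej_set P alpha E t x) \<le> card {1..t}" for x
    by (rule card_mono) (auto simp: rej_set_def)
  then have card_le: "card (rej_set P alpha E t x) \<le> t" for x
    by simp
  show "\<bar>max (real (card (rej_set P alpha E t x))) 1\<bar> \<le> real t + 1" for x
    using card_le[of x] by (simp add: max_def)
qed

lemma mFDR_le:
  assumes "integrable M (\<lambda>x. max (real (card (rej_set P alpha E t x))) 1)"
    and "(\<integral>x. real (card (false_rej_set H0 P alpha E t x)) \<partial>M)
           \<le> a * (\<integral>x. max (real (card (rej_set P alpha E t x))) 1 \<partial>M)"
  shows "mFDR M H0 P alpha E t \<le> a"
proof -
  have "1 \<le> (\<integral>x. max (real (card (rej_set P alpha E t x))) 1 \<partial>M)"
    using integral_mono[OF integrable_const assms(1), of 1] by (simp add: prob_space)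
  with assms(2) show ?thesis
    unfolding mFDR_def by (simp add: pos_divide_le_eq)
qed

lemma integral_Rind_le:
  assumes lag: "\<And>i. L (Suc i) \<le> L i + 1" and j: "1 \<le> j" "j \<le> E j"
    and P_meas: "\<And>i. 1 \<le> i \<Longrightarrow> P i \<in> borel_measurable M"
    and lambda_meas: "\<And>i. withC \<Longrightarrow> 1 \<le> i \<Longrightarrow> lambda i \<in> borel_measurable M"
    and alpha_M: "\<And>i. 1 \<le> i \<Longrightarrow> alpha i \<in> borel_measurable M"
    and alpha_meas: "alpha j \<in> borel_measurable (Fminus M withC P alpha lambda E L j)"
    and alpha_nonneg: "\<And>x. x \<in> space M \<Longrightarrow> 0 \<le> alpha j x"
    and alpha_int: "integrable M (alpha j)"
    and superunif: "\<And>u. 0 \<le> u \<Longrightarrow> u \<le> 1 \<Longrightarrow>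
         AE x in M. real_cond_exp M (Fminus M withC P alpha lambda E L (E j))
                      (indicator {y \<in> space M. P j y \<le> u}) x \<le> u"
  shows "(\<integral>x. Rind P alpha j x \<partial>M) \<le> (\<integral>x. alpha j x \<partial>M)"
proof -
  interpret superuniform_pvalue M "Fminus M withC P alpha lambda E L (E j)" "P j"
    using P_meas lambda_meas alpha_M superunif j(1)
    by unfold_locales (auto intro: subalgebra_Fminus)
  show ?thesis
    unfolding Rind_def
    using measurable_Fminus_mono[OF lag j(2) alpha_meas] alpha_nonneg alpha_int
    by (intro integral_rejection_le) auto
qed

end

theorem proposition1:
  fixes M :: "'a measure"
    and P alpha lambda :: "nat \<Rightarrow> 'a \<Rightarrow> real"
    and E L :: "nat \<Rightarrow> nat"
    and H0 :: "nat set"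
    and withC :: bool
    and a :: real
    and t :: nat
  assumes prob: "prob_space M"
    and H0_idx: "H0 \<subseteq> {1..}"
    and E_ge: "\<And>j. j \<ge> 1 \<Longrightarrow> E j \<ge> j"
    and L_lag: "\<And>j. L (Suc j) \<le> L j + 1"
    and P_meas: "\<And>j. j \<ge> 1 \<Longrightarrow> P j \<in> borel_measurable M"
    and lambda_meas: "\<And>j. withC \<Longrightarrow> j \<ge> 1 \<Longrightarrow> lambda j \<in> borel_measurable M"
    and lambda_range: "\<And>j x. withC \<Longrightarrow> j \<ge> 1 \<Longrightarrow> x \<in> space M \<Longrightarrow>
                          alpha j x \<le> lambda j x \<and> lambda j x < 1"
    and alpha_nonneg: "\<And>j x. j \<ge> 1 \<Longrightarrow> x \<in> space M \<Longrightarrow> alpha j x \<ge> 0"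
    and alpha_meas: "\<And>j. j \<ge> 1 \<Longrightarrow>
                        alpha j \<in> borel_measurable (Fminus M withC P alpha lambda E L j)"
    and superunif: "\<And>s u. s \<in> H0 \<Longrightarrow> 0 \<le> u \<Longrightarrow> u \<le> 1 \<Longrightarrow>
         AE x in M. real_cond_exp M (Fminus M withC P alpha lambda E L (E s))
                      (indicator {y \<in> space M. P s y \<le> u}) x \<le> u"
    and FDP_bound: "AE x in M. FDP_star H0 P alpha E t x \<le> a"
  shows "mFDR M H0 P alpha E t \<le> a"
proof -
  \<comment> \<open>\<open>H0_idx\<close> and \<open>lambda_range\<close> are not needed: only indices in \<open>{1..t}\<close> are counted,
    and the thresholds \<open>lambda\<close> enter only through the filtration.\<close>
  interpret prob_space M by (rule prob)
  let ?N = "{1..t} \<inter> H0"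
  let ?R = "\<lambda>x. max (real (card (rej_set P alpha E t x))) 1"
  have alpha_M: "alpha j \<in> borel_measurable M" if "1 \<le> j" for j
    using P_meas lambda_meas alpha_meas that by (rule levels_borel_measurable)
  have R_int: "integrable M ?R"
    using E_ge P_meas alpha_M by (rule integrable_max_card_rej_set)
  have FDP_eq: "FDP_star H0 P alpha E t x = (\<Sum>j\<in>?N. alpha j x) / ?R x" for x
    using E_ge by (rule FDP_star_eq)
  have FDP: "AE x in M. (\<Sum>j\<in>?N. alpha j x) \<le> a * ?R x"
    using FDP_bound by eventually_elim (simp add: FDP_eq pos_divide_le_eq)
  have alpha_int: "integrable M (alpha j)" if "j \<in> ?N" for j
    using that alpha_M alpha_nonneg R_int
    by (intro integrable_summand_if_dominated[OF _ that _ _ _ FDP]) auto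
  have level: "(\<integral>x. Rind P alpha j x \<partial>M) \<le> (\<integral>x. alpha j x \<partial>M)" if "j \<in> ?N" for j
  proof -
    have j: "1 \<le> j" "j \<in> H0"
      using that by auto
    show ?thesis
      using L_lag j(1) E_ge[OF j(1)] P_meas lambda_meas alpha_M alpha_meas[OF j(1)]
        alpha_nonneg[OF j(1)] alpha_int[OF that] superunif[OF j(2)]
      by (rule integral_Rind_le)
  qed
  have "(\<integral>x. real (card (false_rej_set H0 P alpha E t x)) \<partial>M)
      \<le> (\<Sum>j\<in>?N. \<integral>x. Rind P alpha j x \<partial>M)"
    using E_ge P_meas alpha_M by (rule integral_card_false_rej_set_le)
  also have "\<dots> \<le> (\<Sum>j\<in>?N. \<integral>x. alpha j x \<partial>M)"
    using level by (rule sum_mono)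
  also have "\<dots> = (\<integral>x. (\<Sum>j\<in>?N. alpha j x) \<partial>M)"
    using alpha_int by (simp add: Bochner_Integration.integral_sum)
  also have "\<dots> \<le> a * (\<integral>x. ?R x \<partial>M)"
    using FDP alpha_int R_int
    by (subst integral_mult_right_zero[symmetric]) (intro integral_mono_AE; auto)
  finally show ?thesis
    using R_int by (intro mFDR_le)
qed

end
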